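(* Let $\rho$ be a rearrangement invariant function norm over a resonant $\sigma$-finite measure space $(\Omega,\Sigma,\mu)$. If for every $E\in\Sigma$ with $\mu(E)<\infty$ there is a constant $C_E$ with $\int_Ef\,d\mu\le C_E\rho(f)$ for all measurable $f\colon\Omega\to[0,\infty]$, then $\rho$ is leveling.
   Context: $L_0^+(\mu)$: measurable functions $\Omega\to[0,\infty]$ modulo a.e. equality. A function quasi-norm is $\rho\colon L_0^+(\mu)\to[0,\infty]$ with: $\rho(tf)=t\rho(f)$ ($t\ge0$); $f\le g$ a.e. $\Rightarrow\rho(f)\le\rho(g)$; $\rho(\chi_E)<\infty$ if $\mu(E)<\infty$; for every $E$ with $\mu(E)<\infty$ and $\varepsilon>0$ there is $\delta>0$ with $\mu(A)\le\varepsilon$ whenever $A\subseteq E$ measurable and $\rho(\chi_A)\le\delta$; and $\rho(f+g)\le\kappa(\rho(f)+\rho(g))$. A function norm is one with $\kappa=1$. $\rho$ is rearrangement invariant if every $f$ with $\rho(f)<\infty$ has finite distribution function ($\mu_f(s)=\mu\{f>s\}<\infty$ for all $s>0$) and $\rho(f)=\rho(g)$ whenever $\mu_f=\mu_g$. A measure space is resonant if it is either non-atomic or consists of atoms of equal measure. $\rho$ is leveling if there is $C$ with $\rho(\mathbb{E}(f,\Sigma_0))\le C\rho(f)$ for every finite sub-$\sigma$-algebra $\Sigma_0$ and $f\in L_0^+(\mu)$, where $\mathbb{E}(f,\Sigma_0)$ is the unique nonnegative $\Sigma_0$-measurable $g$ with $\int_Af\,d\mu=\int_Ag\,d\mu$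 for all $A\in\Sigma_0$.
   Formalization: In leveling, $\mathbb{E}(f,\Sigma_0)$ is the average of f over each atom A of $\Sigma_0$ with $0<\mu(A)<\infty$ and 0 on atoms of measure 0 or infinity, instead of the unique $\Sigma_0$-measurable g with matching integrals over all $A\in\Sigma_0$. Apart from conventions, each condition added here is assumed in the paper as well or is needed for the statement above to hold. *)

theory Defs
  imports "HOL-Analysis.Analysis"
begin

text \<open>Elements of L0+(mu) are represented by Borel measurable functions
  space M -> [0,infinity] (type ennreal); a functional rho is required to
  respect a.e. equality, so it is well defined on equivalence classes.\<close>

definition function_quasi_norm ::
  "'a measure \<Rightarrow> (('a \<Rightarrow> ennreal) \<Rightarrow> ennreal) \<Rightarrow> real \<Rightarrow> bool" where
  "function_quasi_norm M \<rho> \<kappa> \<longleftrightarrow>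
     (\<forall>f\<in>borel_measurable M. \<forall>g\<in>borel_measurable M.
        (AE x in M. f x = g x) \<longrightarrow> \<rho> f = \<rho> g) \<and>
     (\<forall>f\<in>borel_measurable M. \<forall>t::real. t \<ge> 0 \<longrightarrow>
        \<rho> (\<lambda>x. ennreal t * f x) = ennreal t * \<rho> f) \<and>
     (\<forall>f\<in>borel_measurable M. \<forall>g\<in>borel_measurable M.
        (AE x in M. f x \<le> g x) \<longrightarrow> \<rho> f \<le> \<rho> g) \<and>
     (\<forall>E\<in>sets M. emeasure M E < \<infinity> \<longrightarrow> \<rho> (indicator E) < \<infinity>) \<and>
     (\<forall>E\<in>sets M. emeasure M E < \<infinity> \<longrightarrow>
        (\<forall>\<epsilon>::real. \<epsilon> > 0 \<longrightarrow> (\<exists>\<delta>::real. \<delta> > 0 \<and>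
           (\<forall>A\<in>sets M. A \<subseteq> E \<longrightarrow> \<rho> (indicator A) \<le> ennreal \<delta>
               \<longrightarrow> emeasure M A \<le> ennreal \<epsilon>)))) \<and>
     (\<forall>f\<in>borel_measurable M. \<forall>g\<in>borel_measurable M.
        \<rho> (\<lambda>x. f x + g x) \<le> ennreal \<kappa> * (\<rho> f + \<rho> g))"

definition function_norm :: "'a measure \<Rightarrow> (('a \<Rightarrow> ennreal) \<Rightarrow> ennreal) \<Rightarrow> bool" where
  "function_norm M \<rho> \<longleftrightarrow> function_quasi_norm M \<rho> 1"

definition distrib_fun :: "'a measure \<Rightarrow> ('a \<Rightarrow> ennreal) \<Rightarrow> real \<Rightarrow> ennreal" where
  "distrib_fun M f s = emeasure M {x \<in> space M. f x > ennreal s}"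

definition rearrangement_invariant ::
  "'a measure \<Rightarrow> (('a \<Rightarrow> ennreal) \<Rightarrow> ennreal) \<Rightarrow> bool" where
  "rearrangement_invariant M \<rho> \<longleftrightarrow>
     (\<forall>f\<in>borel_measurable M. \<rho> f < \<infinity> \<longrightarrow>
        (\<forall>s::real. s > 0 \<longrightarrow> distrib_fun M f s < \<infinity>)) \<and>
     (\<forall>f\<in>borel_measurable M. \<forall>g\<in>borel_measurable M.
        (\<forall>s::real. s \<ge> 0 \<longrightarrow> distrib_fun M f s = distrib_fun M g s) \<longrightarrow> \<rho> f = \<rho> g)"

definition is_atom :: "'a measure \<Rightarrow> 'a set \<Rightarrow> bool" where
  "is_atom M A \<longleftrightarrow> A \<in> sets M \<and> emeasure M A > 0 \<and>
     (\<forall>B\<in>sets M. B \<subseteq> A \<longrightarrow> emeasure M B = 0 \<or> emeasure M (A - B) = 0)"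

definition non_atomic :: "'a measure \<Rightarrow> bool" where
  "non_atomic M \<longleftrightarrow> \<not> (\<exists>A. is_atom M A)"

definition atoms_equal_measure :: "'a measure \<Rightarrow> bool" where
  "atoms_equal_measure M \<longleftrightarrow> (\<exists>\<A> c. (\<forall>A\<in>\<A>. is_atom M A \<and> emeasure M A = c) \<and>
      disjoint \<A> \<and> \<Union>\<A> = space M)"

definition resonant :: "'a measure \<Rightarrow> bool" where
  "resonant M \<longleftrightarrow> non_atomic M \<or> atoms_equal_measure M"

definition finite_sub_sigma :: "'a measure \<Rightarrow> 'a set set \<Rightarrow> bool" where
  "finite_sub_sigma M \<Sigma>\<^sub>0 \<longleftrightarrow> sigma_algebra (space M) \<Sigma>\<^sub>0 \<and> \<Sigma>\<^sub>0 \<subseteq> sets M \<and> finite \<Sigma>\<^sub>0"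

definition fin_atom :: "'a set set \<Rightarrow> 'a \<Rightarrow> 'a set" where
  "fin_atom \<Sigma>\<^sub>0 x = \<Inter>{A \<in> \<Sigma>\<^sub>0. x \<in> A}"

text \<open>Conditional expectation E(f,Sigma0) for a finite sub-sigma-algebra: on each
  atom A of Sigma0 with 0 < mu(A) < infinity it is the average of f over A;
  on atoms of measure 0 or infinity it is set to 0.\<close>
definition cond_exp_fin :: "'a measure \<Rightarrow> 'a set set \<Rightarrow> ('a \<Rightarrow> ennreal) \<Rightarrow> 'a \<Rightarrow> ennreal" where
  "cond_exp_fin M \<Sigma>\<^sub>0 f x =
     (let A = fin_atom \<Sigma>\<^sub>0 x in
      if 0 < emeasure M A \<and> emeasure M A < \<infinity>
      then (\<integral>\<^sup>+ y. f y * indicator A y \<partial>M) / emeasure M A else 0)"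

definition leveling :: "'a measure \<Rightarrow> (('a \<Rightarrow> ennreal) \<Rightarrow> ennreal) \<Rightarrow> bool" where
  "leveling M \<rho> \<longleftrightarrow> (\<exists>C::real. \<forall>\<Sigma>\<^sub>0. finite_sub_sigma M \<Sigma>\<^sub>0 \<longrightarrow>
      (\<forall>f\<in>borel_measurable M. \<rho> (cond_exp_fin M \<Sigma>\<^sub>0 f) \<le> ennreal C * \<rho> f))"

end

theory Submission
  imports Defs
begin

(* Leveling f on a single block B, i.e. replacing f on B by its mean value, does not increase
   rho; leveling the finitely many atoms of a finite sub-sigma-algebra one after the other then
   gives rho (E (f, Sigma0)) <= rho f, so rho is leveling with constant 1.
   If f is constant on each piece of a partition of B into k sets of equal measure, the k cyclic
   rearrangements of these values are equimeasurable with f, hence have the same norm, and their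
   arithmetic mean is the leveled function; the triangle inequality settles this case.
   Resonance provides such partitions: a non-atomic space cuts every set into pieces of any
   prescribed small measure up to a remainder smaller than one piece (Sierpinski), and in the
   atomic case the atoms do it exactly. A general f is approximated from below on B by such step
   functions; the hypothesis int_B f <= C_B * rho f keeps the error in the mean small. *)

section \<open>Rearrangement invariant function norms\<close>

locale ri_function_norm =
  fixes M :: "'a measure" and \<rho> :: "('a \<Rightarrow> ennreal) \<Rightarrow> ennreal"
  assumes function_norm: "function_norm M \<rho>"
    and rearrangement_invariant: "rearrangement_invariant M \<rho>"
begin

lemma rho_AE_cong:
  "f \<in> borel_measurable M \<Longrightarrow> g \<in> borel_measurable M \<Longrightarrow> (AE x in M. f x = g x) \<Longrightarrow> \<rho> f = \<rho> g"
  using function_norm unfolding function_norm_def function_quasi_norm_def by (elim conjE) blast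

lemma rho_cmult:
  "f \<in> borel_measurable M \<Longrightarrow> 0 \<le> t \<Longrightarrow> \<rho> (\<lambda>x. ennreal t * f x) = ennreal t * \<rho> f"
  using function_norm unfolding function_norm_def function_quasi_norm_def by (elim conjE) blast

lemma rho_mono_AE:
  "f \<in> borel_measurable M \<Longrightarrow> g \<in> borel_measurable M \<Longrightarrow> (AE x in M. f x \<le> g x) \<Longrightarrow> \<rho> f \<le> \<rho> g"
  using function_norm unfolding function_norm_def function_quasi_norm_def by (elim conjE) blast

lemma rho_indicator_finite:
  "E \<in> sets M \<Longrightarrow> emeasure M E < \<infinity> \<Longrightarrow> \<rho> (indicator E) < \<infinity>"
  using function_norm unfolding function_norm_def function_quasi_norm_def by (elim conjE) blast

lemma rho_add:
  "f \<in> borel_measurable M \<Longrightarrow> g \<in> borel_measurable M \<Longrightarrow> \<rho> (\<lambda>x. f x + g x) \<le> \<rho> f + \<rho> g"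
  using function_norm unfolding function_norm_def function_quasi_norm_def
  by (elim conjE) (metis ennreal_1 mult_1)

lemma rho_distrib_fun_cong:
  "f \<in> borel_measurable M \<Longrightarrow> g \<in> borel_measurable M \<Longrightarrow>
    (\<And>s. 0 \<le> s \<Longrightarrow> distrib_fun M f s = distrib_fun M g s) \<Longrightarrow> \<rho> f = \<rho> g"
  using rearrangement_invariant unfolding rearrangement_invariant_def by blast

lemma rho_zero: "\<rho> (\<lambda>x. 0) = 0"
  using rho_cmult[of "\<lambda>x. 0" 0] by simp

lemma rho_sum:
  assumes "finite I" "\<And>i. i \<in> I \<Longrightarrow> f i \<in> borel_measurable M"
  shows "\<rho> (\<lambda>x. \<Sum>i\<in>I. f i x) \<le> (\<Sum>i\<in>I. \<rho> (f i))"
  using assms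
proof (induction I rule: finite_induct)
  case (insert i I)
  have "\<rho> (\<lambda>x. \<Sum>j\<in>insert i I. f j x) = \<rho> (\<lambda>x. f i x + (\<Sum>j\<in>I. f j x))"
    using insert.hyps by simp
  also have "\<dots> \<le> \<rho> (f i) + \<rho> (\<lambda>x. \<Sum>j\<in>I. f j x)"
    using insert.prems by (intro rho_add) auto
  also have "\<dots> \<le> \<rho> (f i) + (\<Sum>j\<in>I. \<rho> (f j))"
    using insert by (intro add_left_mono) auto
  finally show ?case
    using insert.hyps by simp
qed (simp add: rho_zero)
end

section \<open>Packings by sets of equal measure\<close>

definition equal_packing :: "'a measure \<Rightarrow> real \<Rightarrow> 'a set \<Rightarrow> 'a set set \<Rightarrow> bool" where
  "equal_packing M p X \<P> \<longleftrightarrow> finite \<P> \<and> disjoint \<P> \<and>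
     (\<forall>P\<in>\<P>. P \<in> sets M \<and> P \<subseteq> X \<and> emeasure M P = ennreal p)"

lemma equal_packing_subset: "equal_packing M p X \<P> \<Longrightarrow> \<Q> \<subseteq> \<P> \<Longrightarrow> equal_packing M p X \<Q>"
  unfolding equal_packing_def by (auto intro: finite_subset pairwise_subset)

lemma equal_packing_emeasure_Union:
  assumes "equal_packing M p X \<P>" "0 \<le> p"
  shows "emeasure M (\<Union>\<P>) = of_nat (card \<P>) * ennreal p"
proof -
  have "finite \<P>" "\<P> \<subseteq> sets M" "disjoint_family_on (\<lambda>P. P) \<P>"
    "\<And>P. P \<in> \<P> \<Longrightarrow> emeasure M P = ennreal p"
    using assms(1) unfolding equal_packing_def disjoint_def disjoint_family_on_def by auto
  then show ?thesis
    using sum_emeasure[of "\<lambda>P. P" \<P> M] by simp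
qed

lemma equal_packing_emeasure_eq:
  assumes "equal_packing M p X \<P>" "0 \<le> p" "X \<in> sets M" "emeasure M (X - \<Union>\<P>) = 0"
  shows "emeasure M X = of_nat (card \<P>) * ennreal p"
proof -
  have "X - (X - \<Union>\<P>) = \<Union>\<P>" "X - \<Union>\<P> \<in> sets M"
    using assms(1,3) unfolding equal_packing_def by auto
  then show ?thesis
    using equal_packing_emeasure_Union[OF assms(1,2)] emeasure_Diff_null_set[of "X - \<Union>\<P>" M X] assms(3,4)
    by (simp add: null_sets_def)
qed

lemma equal_packing_remainder_null:
  assumes "equal_packing M p X \<P>" "X \<in> sets M" "emeasure M X = of_nat N * ennreal p" "0 < p"
    and "emeasure M (X - \<Union>\<P>) < ennreal p"
  shows "emeasure M (X - \<Union>\<P>) = 0"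
proof -
  define e where "e = measure M (X - \<Union>\<P>)"
  have "emeasure M (X - \<Union>\<P>) = ennreal e"
    using assms(5) ennreal_less_top[of p] unfolding e_def
    by (metis emeasure_eq_ennreal_measure order.strict_trans less_irrefl)
  have "\<Union>\<P> \<in> sets M" "\<Union>\<P> \<subseteq> X"
    using assms(1) unfolding equal_packing_def by auto
  then have "emeasure M X = emeasure M (\<Union>\<P>) + emeasure M (X - \<Union>\<P>)"
    using assms(2) by (metis Diff_partition Diff_disjoint plus_emeasure sets.Diff)
  then have "ennreal (real N * p) = ennreal (real (card \<P>) * p + e)"
    using assms(1,3,4) \<open>emeasure M (X - \<Union>\<P>) = ennreal e\<close>
    by (simp add: equal_packing_emeasure_Union ennreal_of_nat_eq_real_of_nat ennreal_mult ennreal_plus e_def)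
  then have "real N * p = real (card \<P>) * p + e"
    using assms(4) by (simp add: e_def flip: ennreal_plus)
  then have e_eq: "e / p = real N - real (card \<P>)"
    using assms(4) by (simp add: field_simps)
  have "e < p"
    using assms(4,5) \<open>emeasure M (X - \<Union>\<P>) = ennreal e\<close> by (simp add: e_def ennreal_less_iff)
  then have "0 \<le> e / p" "e / p < 1"
    using assms(4) by (simp_all add: e_def)
  then have "real N < real (card \<P> + 1)" "real (card \<P>) \<le> real N"
    using e_eq by simp_all
  then have "N = card \<P>"
    unfolding of_nat_less_iff of_nat_le_iff by linarith
  then show ?thesis
    using e_eq assms(4) \<open>emeasure M (X - \<Union>\<P>) = ennreal e\<close> by simp
qed

lemma equal_packing_UN:
  assumes "finite V" "\<And>w. w \<in> V \<Longrightarrow> equal_packing M p (X w) (\<Q> w)"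
    and "disjoint_family_on X V" "\<And>w. w \<in> V \<Longrightarrow> X w \<subseteq> B"
  shows "equal_packing M p B (\<Union>w\<in>V. \<Q> w)"
proof -
  have Q: "Q \<in> sets M" "Q \<subseteq> X w" "emeasure M Q = ennreal p" if "w \<in> V" "Q \<in> \<Q> w" for w Q
    using assms(2)[OF that(1)] that(2) unfolding equal_packing_def by auto
  have Q_fin: "finite (\<Q> w)" "disjoint (\<Q> w)" if "w \<in> V" for w
    using assms(2)[OF that] unfolding equal_packing_def by auto
  have "disjoint (\<Union>w\<in>V. \<Q> w)"
  proof (rule disjointI)
    fix Q Q' assume "Q \<in> (\<Union>w\<in>V. \<Q> w)" "Q' \<in> (\<Union>w\<in>V. \<Q> w)" "Q \<noteq> Q'"
    then obtain w w' where w: "w \<in> V" "Q \<in> \<Q> w" "w' \<in> V" "Q' \<in> \<Q> w'"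
      by blast
    show "Q \<inter> Q' = {}"
    proof (cases "w = w'")
      case True
      then show ?thesis
        using disjointD[OF Q_fin(2)[OF w(1)]] w \<open>Q \<noteq> Q'\<close> by blast
    next
      case False
      then show ?thesis
        using Q(2)[OF w(1,2)] Q(2)[OF w(3,4)] assms(3) w(1,3) unfolding disjoint_family_on_def by blast
    qed
  qed
  moreover have "finite (\<Union>w\<in>V. \<Q> w)"
    using assms(1) Q_fin(1) by simp
  ultimately show ?thesis
    using assms(4) Q unfolding equal_packing_def by blast
qed

section \<open>Non-atomic measures\<close>

lemma non_atomic_exists_half:
  assumes "non_atomic M" "A \<in> fmeasurable M" "0 < measure M A"
  shows "\<exists>B\<in>sets M. B \<subseteq> A \<and> 0 < measure M B \<and> measure M B \<le> measure M A / 2"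
proof -
  have "\<not> is_atom M A"
    using assms(1) unfolding non_atomic_def by blast
  moreover have "0 < emeasure M A"
    using assms(2,3) by (simp add: emeasure_eq_measure2)
  ultimately obtain B where B: "B \<in> sets M" "B \<subseteq> A" "emeasure M B \<noteq> 0" "emeasure M (A - B) \<noteq> 0"
    using assms(2) unfolding is_atom_def by blast
  have fin: "B \<in> fmeasurable M" "A - B \<in> fmeasurable M"
    using assms(2) B by (auto intro: fmeasurableI2)
  then have pos: "0 < measure M B" "0 < measure M (A - B)"
    using B(3,4) by (auto simp: emeasure_eq_measure2 zero_less_measure_iff)
  have "measure M (A - B) = measure M A - measure M B"
    using assms(2) B(1,2) by (simp add: measurable_measure_Diff)
  then consider "measure M B \<le> measure M A / 2" | "measure M (A - B) \<le> measure M A / 2"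
    by linarith
  then show ?thesis
  proof cases
    case 1
    then show ?thesis using B(1,2) pos(1) by blast
  next
    case 2
    then show ?thesis using B(1,2) fin(2) pos(2) by blast
  qed
qed

lemma non_atomic_exists_small:
  assumes "non_atomic M" "A \<in> fmeasurable M" "0 < measure M A" "0 < e"
  shows "\<exists>B\<in>sets M. B \<subseteq> A \<and> 0 < measure M B \<and> measure M B \<le> e"
proof -
  have halving: "\<exists>B\<in>sets M. B \<subseteq> A \<and> 0 < measure M B \<and> measure M B \<le> measure M A / 2 ^ n" for n
  proof (induction n)
    case (Suc n)
    then obtain B where B: "B \<in> sets M" "B \<subseteq> A" "0 < measure M B" "measure M B \<le> measure M A / 2 ^ n"
      by blast
    then have "B \<in> fmeasurable M"
      using assms(2) by (auto intro: fmeasurableI2)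
    then obtain C where "C \<in> sets M" "C \<subseteq> B" "0 < measure M C" "measure M C \<le> measure M B / 2"
      using non_atomic_exists_half[OF assms(1)] B(3) by blast
    moreover have "measure M B / 2 \<le> measure M A / 2 ^ Suc n"
      using B(4) by (simp add: field_simps)
    ultimately show ?case
      using B(2) by (meson order_trans)
  qed (use assms in auto)
  obtain n :: nat where "measure M A / e < 2 ^ n"
    using real_arch_pow[of 2 "measure M A / e"] by auto
  then have "measure M A / 2 ^ n \<le> e"
    using assms(4) by (simp add: field_simps)
  then show ?thesis
    using halving[of n] by (meson order_trans)
qed

lemma exists_nearly_maximal_subset:
  assumes "Y \<in> fmeasurable M" "0 \<le> b"
  shows "\<exists>G\<in>sets M. G \<subseteq> Y \<and> measure M G \<le> b \<and>
    (\<forall>H\<in>sets M. H \<subseteq> Y \<longrightarrow> measure M H \<le> b \<longrightarrow> measure M H \<le> 2 * measure M G)"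
proof -
  define S where "S = measure M ` {H \<in> sets M. H \<subseteq> Y \<and> measure M H \<le> b}"
  have "{} \<in> {H \<in> sets M. H \<subseteq> Y \<and> measure M H \<le> b}"
    using assms(2) by simp
  then have ne: "S \<noteq> {}"
    unfolding S_def by blast
  have bdd: "bdd_above S"
    unfolding S_def by (rule bdd_aboveI[of _ b]) auto
  show ?thesis
  proof (cases "Sup S \<le> 0")
    case True
    then have "measure M H \<le> 0" if "H \<in> sets M" "H \<subseteq> Y" "measure M H \<le> b" for H
      using cSup_upper[OF _ bdd, of "measure M H"] that unfolding S_def by fastforce
    then show ?thesis
      using assms(2) by (intro bexI[of _ "{}"]) auto
  next
    case False
    then obtain s where "s \<in> S" "Sup S / 2 < s"
      using less_cSupD[OF ne, of "Sup S / 2"] by auto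
    then obtain G where G: "G \<in> sets M" "G \<subseteq> Y" "measure M G \<le> b" "Sup S / 2 < measure M G"
      unfolding S_def by blast
    have "measure M H \<le> Sup S" if "H \<in> sets M" "H \<subseteq> Y" "measure M H \<le> b" for H
      using cSup_upper[OF _ bdd, of "measure M H"] that unfolding S_def by blast
    then show ?thesis
      using G by (intro bexI[of _ G]) force+
  qed
qed

lemma incseq_measure_increments_tendsto_zero:
  assumes "incseq F" "\<And>n. F n \<in> sets M" "(\<Union>n. F n) \<in> fmeasurable M"
  shows "(\<lambda>n. measure M (F (Suc n)) - measure M (F n)) \<longlonglongrightarrow> 0"
proof -
  have "(\<lambda>n. measure M (F n)) \<longlonglongrightarrow> measure M (\<Union>n. F n)"
    using assms by (intro Lim_measure_incseq) (auto simp: fmeasurable_def)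
  then have "(\<lambda>n. measure M (F (Suc n)) - measure M (F n)) \<longlonglongrightarrow> measure M (\<Union>n. F n) - measure M (\<Union>n. F n)"
    by (intro tendsto_diff LIMSEQ_Suc)
  then show ?thesis
    by simp
qed

lemma greedy_exhaustion:
  assumes X: "X \<in> fmeasurable M" and t: "0 \<le> t"
  obtains F where "incseq F" "\<And>n. F n \<in> sets M" "\<And>n. F n \<subseteq> X" "\<And>n. measure M (F n) \<le> t"
    "\<And>n H. H \<in> sets M \<Longrightarrow> H \<subseteq> X - F n \<Longrightarrow> measure M H \<le> t - measure M (F n) \<Longrightarrow>
      measure M H \<le> 2 * (measure M (F (Suc n)) - measure M (F n))"
proof -
  define \<S> where "\<S> = {F \<in> sets M. measure M F \<le> t}"
  have "\<forall>F\<in>\<S>. \<exists>G. G \<in> sets M \<and> G \<subseteq> X - F \<and> measure M G \<le> t - measure M F \<and>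
      (\<forall>H\<in>sets M. H \<subseteq> X - F \<longrightarrow> measure M H \<le> t - measure M F \<longrightarrow> measure M H \<le> 2 * measure M G)"
    unfolding \<S>_def using fmeasurableD[OF X]
    by (metis (no_types, lifting) Diff_subset diff_ge_0_iff_ge exists_nearly_maximal_subset fmeasurableI2[OF X] mem_Collect_eq sets.Diff)
  then obtain g where g: "\<forall>F\<in>\<S>. g F \<in> sets M \<and> g F \<subseteq> X - F \<and> measure M (g F) \<le> t - measure M F \<and>
      (\<forall>H\<in>sets M. H \<subseteq> X - F \<longrightarrow> measure M H \<le> t - measure M F \<longrightarrow> measure M H \<le> 2 * measure M (g F))"
    by (rule bchoice[elim_format]) blast
  have g_measure: "measure M (F \<union> g F) = measure M F + measure M (g F)" if "F \<in> \<S>" "F \<subseteq> X" for F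
  proof -
    have "F \<in> fmeasurable M" "g F \<in> fmeasurable M"
      using g that unfolding \<S>_def by (auto intro: fmeasurableI2[OF X])
    moreover have "g F - F = g F"
      using g that by auto
    ultimately show ?thesis
      by (metis measure_Un2)
  qed
  define F where "F n = ((\<lambda>A. A \<union> g A) ^^ n) {}" for n
  have F_Suc: "F (Suc n) = F n \<union> g (F n)" for n
    unfolding F_def by simp
  have F: "F n \<in> \<S> \<and> F n \<subseteq> X" for n
  proof (induction n)
    case (Suc n)
    then show ?case
      using g g_measure[of "F n"] unfolding F_Suc \<S>_def by auto
  qed (simp add: F_def \<S>_def t)
  have incF: "incseq F"
    using F_Suc by (intro incseq_SucI) auto
  have F_bounds: "F n \<in> sets M" "measure M (F n) \<le> t" for n
    using F unfolding \<S>_def by auto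
  have step: "measure M H \<le> 2 * (measure M (F (Suc n)) - measure M (F n))"
    if "H \<in> sets M" "H \<subseteq> X - F n" "measure M H \<le> t - measure M (F n)" for n H
  proof -
    have "measure M H \<le> 2 * measure M (g (F n))"
      using g[THEN bspec, OF F[of n, THEN conjunct1]] that by blast
    then show ?thesis
      using g_measure[OF F[of n, THEN conjunct1] F[of n, THEN conjunct2]] unfolding F_Suc by simp
  qed
  show ?thesis
    using that[OF incF F_bounds(1) F[THEN conjunct2] F_bounds(2) step] .
qed

(* If the union U of a greedy exhaustion fell short of t, a small set in X - U would be admissible
   at every step, although the increments tend to 0. *)
lemma non_atomic_exists_subset_measure:
  assumes na: "non_atomic M" and X: "X \<in> fmeasurable M" and t: "0 \<le> t" "t \<le> measure M X"
  shows "\<exists>Y\<in>sets M. Y \<subseteq> X \<and> measure M Y = t"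
proof -
  obtain F where incF: "incseq F" and F: "\<And>n. F n \<in> sets M" "\<And>n. F n \<subseteq> X" "\<And>n. measure M (F n) \<le> t"
    and greedy: "\<And>n H. H \<in> sets M \<Longrightarrow> H \<subseteq> X - F n \<Longrightarrow> measure M H \<le> t - measure M (F n) \<Longrightarrow>
      measure M H \<le> 2 * (measure M (F (Suc n)) - measure M (F n))"
    using greedy_exhaustion[OF X t(1)] by metis
  define U where "U = (\<Union>n. F n)"
  have "U \<subseteq> X" "U \<in> sets M"
    using F unfolding U_def by auto
  then have U: "U \<in> fmeasurable M" "U \<subseteq> X"
    by (auto intro: fmeasurableI2[OF X])
  have "(\<lambda>n. measure M (F n)) \<longlonglongrightarrow> measure M U"
    using F U incF unfolding U_def by (intro Lim_measure_incseq) (auto simp: fmeasurable_def)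
  then have "measure M U \<le> t"
    using F by (intro LIMSEQ_le_const2) auto
  moreover have "\<not> measure M U < t"
  proof
    assume "measure M U < t"
    moreover have "X - U \<in> fmeasurable M" "measure M (X - U) = measure M X - measure M U"
      using U X by (auto intro: fmeasurableI2 simp: measurable_measure_Diff)
    ultimately obtain H where H: "H \<in> sets M" "H \<subseteq> X - U" "0 < measure M H" "measure M H \<le> t - measure M U"
      using non_atomic_exists_small[OF na, of "X - U" "t - measure M U"] t by auto
    have "measure M H / 2 \<le> measure M (F (Suc n)) - measure M (F n)" for n
    proof -
      have "F n \<subseteq> U"
        unfolding U_def by blast
      then have "measure M (F n) \<le> measure M U"
        using F U by (intro measure_mono_fmeasurable) auto
      have "H \<subseteq> X - F n"
        using H(2) \<open>F n \<subseteq> U\<close> by blast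
      moreover have "measure M H \<le> t - measure M (F n)"
        using H(4) \<open>measure M (F n) \<le> measure M U\<close> by linarith
      ultimately have "measure M H \<le> 2 * (measure M (F (Suc n)) - measure M (F n))"
        by (rule greedy[OF H(1)])
      then show ?thesis
        by simp
    qed
    then have "measure M H / 2 \<le> 0"
      using incseq_measure_increments_tendsto_zero[OF incF F(1)] U unfolding U_def
      by (intro LIMSEQ_le_const) auto
    then show False
      using H(3) by simp
  qed
  ultimately show ?thesis
    using U by (intro bexI[of _ U]) auto
qed

lemma non_atomic_packing:
  assumes na: "non_atomic M" and X: "X \<in> fmeasurable M" and p: "0 < p"
  shows "\<exists>\<P>. equal_packing M p X \<P> \<and> emeasure M (X - \<Union>\<P>) < ennreal p"
proof -
  have "X \<in> fmeasurable M \<Longrightarrow> measure M X < real n * p \<Longrightarrow>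
      \<exists>\<P>. equal_packing M p X \<P> \<and> emeasure M (X - \<Union>\<P>) < ennreal p" for n X
  proof (induction n arbitrary: X)
    case (Suc n)
    show ?case
    proof (cases "measure M X < p")
      case True
      then show ?thesis
        using Suc.prems(1) p by (intro exI[of _ "{}"]) (auto simp: equal_packing_def emeasure_eq_measure2 ennreal_lessI)
    next
      case False
      then obtain Y where Y: "Y \<in> sets M" "Y \<subseteq> X" "measure M Y = p"
        using non_atomic_exists_subset_measure[OF na Suc.prems(1), of p] p by auto
      then have Y_fin: "Y \<in> fmeasurable M" "X - Y \<in> fmeasurable M"
        using Suc.prems(1) by (auto intro: fmeasurableI2)
      have "measure M (X - Y) < real n * p"
        using Suc.prems Y by (simp add: measurable_measure_Diff Y_fin algebra_simps)
      then obtain \<Q> where \<Q>: "equal_packing M p (X - Y) \<Q>" "emeasure M (X - Y - \<Union>\<Q>) < ennreal p"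
        using Suc.IH[OF Y_fin(2)] by blast
      have "equal_packing M p X (insert Y \<Q>)"
        using \<Q>(1) Y Y_fin(1)
        unfolding equal_packing_def by (auto simp: pairwise_insert disjnt_def emeasure_eq_measure2)
      moreover have "X - \<Union>(insert Y \<Q>) = X - Y - \<Union>\<Q>"
        by auto
      ultimately show ?thesis
        using \<Q>(2) by metis
    qed
  qed simp
  moreover obtain n where "measure M X < real n * p"
    using ex_less_of_nat_mult[OF p] by blast
  ultimately show ?thesis
    using X by blast
qed

section \<open>Atoms of equal measure\<close>

locale equal_atoms = sigma_finite_measure M for M :: "'a measure" +
  fixes \<A> :: "'a set set" and c :: ennreal
  assumes atom: "A \<in> \<A> \<Longrightarrow> is_atom M A"
    and atom_measure: "A \<in> \<A> \<Longrightarrow> emeasure M A = c"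
    and disjoint_atoms: "disjoint \<A>"
    and Union_atoms: "\<Union>\<A> = space M"
begin

lemma atom_sets: "A \<in> \<A> \<Longrightarrow> A \<in> sets M"
  using atom unfolding is_atom_def by blast

lemma atom_Int_measure:
  assumes "A \<in> \<A>" "X \<in> sets M"
  shows "emeasure M (A \<inter> X) = 0 \<or> emeasure M (A \<inter> X) = c"
proof -
  have "emeasure M (A \<inter> X) = 0 \<or> emeasure M (A - A \<inter> X) = 0"
    using atom[OF assms(1)] assms atom_sets unfolding is_atom_def by blast
  moreover have "emeasure M A = emeasure M (A \<inter> X) + emeasure M (A - A \<inter> X)"
    using assms atom_sets by (subst plus_emeasure) (auto simp: Un_absorb1)
  ultimately show ?thesis
    using atom_measure[OF assms(1)] by auto
qed

lemma finite_atoms_meeting: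
  assumes F: "F \<in> sets M" "emeasure M F < \<infinity>"
  shows "finite {A \<in> \<A>. 0 < emeasure M (A \<inter> F)}" (is "finite ?S")
proof (cases "?S = {}")
  case False
  then obtain A0 where "A0 \<in> \<A>" "0 < emeasure M (A0 \<inter> F)"
    by blast
  then have "emeasure M (A0 \<inter> F) = c"
    using atom_Int_measure F by fastforce
  moreover have "emeasure M (A0 \<inter> F) \<le> emeasure M F"
    using F by (intro emeasure_mono) auto
  ultimately have "0 < c" "c < \<infinity>"
    using F(2) \<open>0 < emeasure M (A0 \<inter> F)\<close> by auto
  then obtain r where r: "c = ennreal r" "0 < r"
    by (cases c) auto
  have "card G \<le> nat \<lceil>measure M F / r\<rceil>" if G: "G \<subseteq> ?S" "finite G" for G
  proof -
    have meet: "A \<in> \<A>" "emeasure M (A \<inter> F) = c" if "A \<in> G" for A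
      using G that atom_Int_measure[OF _ F(1)] by fastforce+
    have "of_nat (card G) * c = (\<Sum>A\<in>G. emeasure M (A \<inter> F))"
      using meet by simp
    also have "\<dots> = emeasure M (\<Union>A\<in>G. A \<inter> F)"
    proof (rule sum_emeasure)
      show "disjoint_family_on (\<lambda>A. A \<inter> F) G"
        using disjoint_atoms meet unfolding disjoint_family_on_def disjoint_def by blast
    qed (use G meet atom_sets F in auto)
    also have "\<dots> \<le> emeasure M F"
      using F by (intro emeasure_mono) auto
    finally have "ennreal (real (card G) * r) \<le> ennreal (measure M F)"
      using F r by (simp add: emeasure_eq_ennreal_measure less_top ennreal_mult ennreal_of_nat_eq_real_of_nat)
    then have "real (card G) \<le> measure M F / r"
      using r by (simp add: field_simps ennreal_le_iff)
    then show ?thesis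
      by linarith
  qed
  then show ?thesis
    using finite_if_finite_subsets_card_bdd by blast
qed (metis finite.emptyI)

lemma countable_atoms: "countable \<A>"
proof -
  obtain \<F> where \<F>: "countable \<F>" "\<F> \<subseteq> sets M" "\<Union>\<F> = space M" "\<And>F. F \<in> \<F> \<Longrightarrow> emeasure M F \<noteq> \<infinity>"
    using sigma_finite_countable by blast
  have "\<A> \<subseteq> (\<Union>F\<in>\<F>. {A \<in> \<A>. 0 < emeasure M (A \<inter> F)})"
  proof
    fix A assume A: "A \<in> \<A>"
    have "A = (\<Union>F\<in>\<F>. A \<inter> F)"
      using \<F>(3) A Union_atoms by auto
    moreover have "0 < emeasure M A"
      using atom[OF A] unfolding is_atom_def by blast
    ultimately have "(\<Union>F\<in>\<F>. A \<inter> F) \<notin> null_sets M"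
      by auto
    then obtain F where "F \<in> \<F>" "A \<inter> F \<notin> null_sets M"
      using null_sets_UN'[OF \<F>(1), of "\<lambda>F. A \<inter> F"] by blast
    then show "A \<in> (\<Union>F\<in>\<F>. {A \<in> \<A>. 0 < emeasure M (A \<inter> F)})"
      using A \<F>(2) atom_sets[OF A] by (auto simp: zero_less_iff_neq_zero)
  qed
  moreover have "countable (\<Union>F\<in>\<F>. {A \<in> \<A>. 0 < emeasure M (A \<inter> F)})"
    using \<F> by (intro countable_UN[OF \<F>(1)] countable_finite finite_atoms_meeting) (auto simp: less_top)
  ultimately show ?thesis
    using countable_subset by blast
qed

lemma atom_packing:
  assumes X: "X \<in> sets M" "emeasure M X < \<infinity>"
  shows "\<exists>\<P>. finite \<P> \<and> disjoint \<P> \<and> (\<forall>P\<in>\<P>. P \<in> sets M \<and> P \<subseteq> X \<and> emeasure M P = c) \<and>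
    emeasure M (X - \<Union>\<P>) = 0"
proof -
  define S where "S = {A \<in> \<A>. 0 < emeasure M (A \<inter> X)}"
  define \<P> where "\<P> = (\<lambda>A. A \<inter> X) ` S"
  have "finite \<P>"
    unfolding \<P>_def S_def by (intro finite_imageI finite_atoms_meeting X)
  moreover have "disjoint \<P>"
    unfolding \<P>_def
    by (rule disjoint_image_subset[OF pairwise_subset[OF disjoint_atoms]])
      (auto simp: S_def)
  moreover have P: "P \<in> sets M \<and> P \<subseteq> X \<and> emeasure M P = c" if P_in: "P \<in> \<P>" for P
  proof -
    obtain A where A: "A \<in> \<A>" "0 < emeasure M (A \<inter> X)" and "P = A \<inter> X"
      using P_in unfolding \<P>_def S_def by blast
    moreover have "emeasure M (A \<inter> X) = c"
      using atom_Int_measure[OF A(1) X(1)] A(2) by auto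
    moreover have "A \<inter> X \<in> sets M"
      using atom_sets[OF A(1)] X(1) by blast
    ultimately show ?thesis
      by blast
  qed
  moreover have "emeasure M (X - \<Union>\<P>) = 0"
  proof -
    have "X - \<Union>\<P> \<subseteq> (\<Union>A\<in>\<A> - S. A \<inter> X)"
    proof
      fix x assume x: "x \<in> X - \<Union>\<P>"
      then obtain A where "A \<in> \<A>" "x \<in> A"
        using Union_atoms sets.sets_into_space[OF X(1)] by blast
      moreover have "A \<notin> S"
        using x \<open>x \<in> A\<close> unfolding \<P>_def by blast
      ultimately show "x \<in> (\<Union>A\<in>\<A> - S. A \<inter> X)"
        using x by blast
    qed
    moreover have "(\<Union>A\<in>\<A> - S. A \<inter> X) \<in> null_sets M"
    proof (rule null_sets_UN')
      fix A assume "A \<in> \<A> - S"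
      then show "A \<inter> X \<in> null_sets M"
        using atom_sets X(1) by (intro null_setsI) (auto simp: S_def)
    qed (use countable_atoms in blast)
    moreover have "X - \<Union>\<P> \<in> sets M"
      using \<open>finite \<P>\<close> P X(1) by (intro sets.Diff sets.finite_Union) blast+
    ultimately show ?thesis
      by (meson null_setsD1 null_sets_subset)
  qed
  ultimately show ?thesis
    by blast
qed

end

section \<open>Fine packings of resonant spaces\<close>

(* The remainder bound r is decoupled from the piece measure p: without atoms one takes r = p
   and makes p small, with atoms p is the atom measure and the remainder is null. *)
definition packable :: "'a measure \<Rightarrow> 'a set \<Rightarrow> real \<Rightarrow> real \<Rightarrow> bool" where
  "packable M B p r \<longleftrightarrow>
     (\<forall>X\<in>sets M. X \<subseteq> B \<longrightarrow> (\<exists>\<P>. equal_packing M p X \<P> \<and> emeasure M (X - \<Union>\<P>) < ennreal r))"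

definition finely_packable :: "'a measure \<Rightarrow> 'a set \<Rightarrow> bool" where
  "finely_packable M B \<longleftrightarrow>
     (\<forall>\<delta>>0. \<exists>p r N. 0 < r \<and> r \<le> p \<and> r \<le> \<delta> \<and> emeasure M B = of_nat N * ennreal p \<and> packable M B p r)"

lemma non_atomic_finely_packable:
  assumes na: "non_atomic M" and B: "B \<in> sets M" "0 < emeasure M B" "emeasure M B < \<infinity>"
  shows "finely_packable M B"
  unfolding finely_packable_def
proof (intro allI impI)
  fix \<delta> :: real assume \<delta>: "0 < \<delta>"
  define N where "N = nat \<lceil>measure M B / \<delta>\<rceil>"
  define p where "p = measure M B / real N"
  have "0 < measure M B"
    using B by (simp add: emeasure_eq_measure2 fmeasurableI less_top)
  then have N: "measure M B / \<delta> \<le> real N" "0 < real N"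
    using \<delta> unfolding N_def by (auto intro: order.strict_trans2[OF divide_pos_pos])
  then have p: "0 < p" "p \<le> \<delta>"
    using \<open>0 < measure M B\<close> \<delta> unfolding p_def by (auto simp: field_simps)
  have "emeasure M B = of_nat N * ennreal p"
    using B N(2) p(1) unfolding p_def
    by (simp add: emeasure_eq_ennreal_measure less_top ennreal_of_nat_eq_real_of_nat flip: ennreal_mult)
  moreover have "packable M B p p"
    unfolding packable_def
    using B(3) p(1) by (auto intro!: non_atomic_packing[OF na] fmeasurableI2[OF fmeasurableI[OF B(1)]])
  ultimately show "\<exists>p r N. 0 < r \<and> r \<le> p \<and> r \<le> \<delta> \<and> emeasure M B = of_nat N * ennreal p \<and> packable M B p r"
    using p by blast
qed

lemma (in equal_atoms) atoms_finely_packable: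
  assumes B: "B \<in> sets M" "0 < emeasure M B" "emeasure M B < \<infinity>"
  shows "finely_packable M B"
  unfolding finely_packable_def
proof (intro allI impI)
  fix \<delta> :: real assume \<delta>: "0 < \<delta>"
  obtain \<P> where \<P>: "finite \<P>" "disjoint \<P>" "\<forall>P\<in>\<P>. P \<in> sets M \<and> P \<subseteq> B \<and> emeasure M P = c"
    "emeasure M (B - \<Union>\<P>) = 0"
    using atom_packing[OF B(1,3)] by blast
  have "\<P> \<noteq> {}"
    using \<P>(4) B(2) by auto
  then obtain P where "P \<in> \<P>"
    by blast
  then have "c \<le> emeasure M B"
    using \<P>(3) B(1) emeasure_mono[of P B M] by auto
  then obtain p where p: "c = ennreal p" "0 \<le> p"
    using B(3) by (cases c) auto
  have "equal_packing M p B \<P>"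
    using \<P> p unfolding equal_packing_def by blast
  then have B_measure: "emeasure M B = of_nat (card \<P>) * ennreal p"
    using equal_packing_emeasure_eq \<P>(4) p(2) B(1) by blast
  then have "0 < p"
    using B(2) p(2) by (cases "p = 0") auto
  define r where "r = min p \<delta>"
  have "packable M B p r"
    unfolding packable_def
  proof (intro ballI impI)
    fix X assume X: "X \<in> sets M" "X \<subseteq> B"
    then have "emeasure M X \<le> emeasure M B"
      using B(1) by (intro emeasure_mono)
    then obtain \<Q> where \<Q>: "finite \<Q>" "disjoint \<Q>" "\<forall>Q\<in>\<Q>. Q \<in> sets M \<and> Q \<subseteq> X \<and> emeasure M Q = c"
      "emeasure M (X - \<Union>\<Q>) = 0"
      using atom_packing[OF X(1)] B(3) by (meson le_less_trans)
    then have "equal_packing M p X \<Q>"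
      using p unfolding equal_packing_def by blast
    moreover have "emeasure M (X - \<Union>\<Q>) < ennreal r"
      using \<Q>(4) \<open>0 < p\<close> \<delta> unfolding r_def by simp
    ultimately show "\<exists>\<Q>. equal_packing M p X \<Q> \<and> emeasure M (X - \<Union>\<Q>) < ennreal r"
      by blast
  qed
  moreover have "0 < r" "r \<le> p" "r \<le> \<delta>"
    using \<open>0 < p\<close> \<delta> unfolding r_def by auto
  ultimately show "\<exists>p r N. 0 < r \<and> r \<le> p \<and> r \<le> \<delta> \<and> emeasure M B = of_nat N * ennreal p \<and> packable M B p r"
    using B_measure by (intro exI[of _ p] exI[of _ r] exI[of _ "card \<P>"]) simp
qed

lemma resonant_finely_packable:
  assumes "sigma_finite_measure M" "resonant M"
    and "B \<in> sets M" "0 < emeasure M B" "emeasure M B < \<infinity>"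
  shows "finely_packable M B"
proof (cases "non_atomic M")
  case True
  show ?thesis
    using non_atomic_finely_packable[OF True assms(3-5)] .
next
  case False
  then obtain \<A> c where "\<forall>A\<in>\<A>. is_atom M A \<and> emeasure M A = c" "disjoint \<A>" "\<Union>\<A> = space M"
    using assms(2) unfolding resonant_def atoms_equal_measure_def by blast
  then interpret equal_atoms M \<A> c
    using assms(1) by unfold_locales (auto simp: sigma_finite_measure_def)
  show ?thesis
    using atoms_finely_packable[OF assms(3-5)] .
qed

lemma packable_level_sets:
  assumes B: "B \<in> sets M" and pack: "packable M B p r" and s: "simple_function M s"
  shows "\<exists>\<Q>. equal_packing M p B \<Q> \<and> (\<forall>Q\<in>\<Q>. \<exists>w. \<forall>x\<in>Q. s x = w) \<and>
    emeasure M (B - \<Union>\<Q>) \<le> of_nat (card (s ` space M)) * ennreal r"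
proof -
  define V where "V = s ` space M"
  have V_finite: "finite V"
    unfolding V_def using simple_functionD(1)[OF s] .
  define X where "X w = {x \<in> B. s x = w}" for w
  have X_sets: "X w \<in> sets M" for w
  proof -
    have "X w = B \<inter> (s -` {w} \<inter> space M)"
      using sets.sets_into_space[OF B] unfolding X_def by auto
    then show ?thesis
      using B simple_functionD(2)[OF s] by simp
  qed
  define \<Q> where "\<Q> w = (SOME \<Q>. equal_packing M p (X w) \<Q> \<and> emeasure M (X w - \<Union>\<Q>) < ennreal r)" for w
  have \<Q>: "equal_packing M p (X w) (\<Q> w) \<and> emeasure M (X w - \<Union>(\<Q> w)) < ennreal r" for w
  proof -
    have "X w \<subseteq> B"
      unfolding X_def by blast
    then show ?thesis
      unfolding \<Q>_def by (rule someI_ex[OF pack[unfolded packable_def, rule_format, OF X_sets]])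
  qed
  have "disjoint_family_on X V"
    unfolding disjoint_family_on_def X_def by blast
  then have "equal_packing M p B (\<Union>w\<in>V. \<Q> w)"
    using V_finite \<Q> by (intro equal_packing_UN) (auto simp: X_def)
  moreover have "\<forall>Q\<in>(\<Union>w\<in>V. \<Q> w). \<exists>w. \<forall>x\<in>Q. s x = w"
    using \<Q> unfolding equal_packing_def X_def by blast
  moreover have "emeasure M (B - \<Union>(\<Union>w\<in>V. \<Q> w)) \<le> of_nat (card V) * ennreal r"
  proof -
    have "B - \<Union>(\<Union>w\<in>V. \<Q> w) \<subseteq> (\<Union>w\<in>V. X w - \<Union>(\<Q> w))"
      using sets.sets_into_space[OF B] unfolding X_def V_def by blast
    then have "emeasure M (B - \<Union>(\<Union>w\<in>V. \<Q> w)) \<le> emeasure M (\<Union>w\<in>V. X w - \<Union>(\<Q> w))"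
      using \<Q> X_sets V_finite unfolding equal_packing_def
      by (intro emeasure_mono) (auto intro!: sets.finite_UN sets.Diff sets.finite_Union)
    also have "\<dots> \<le> (\<Sum>w\<in>V. emeasure M (X w - \<Union>(\<Q> w)))"
      using \<Q> X_sets V_finite unfolding equal_packing_def
      by (intro emeasure_subadditive_finite) (auto intro!: sets.Diff sets.finite_Union)
    also have "\<dots> \<le> (\<Sum>w\<in>V. ennreal r)"
      using \<Q> by (intro sum_mono) (simp add: less_imp_le)
    finally show ?thesis
      by simp
  qed
  ultimately show ?thesis
    unfolding V_def[symmetric] by blast
qed

lemma packable_complete:
  assumes B: "B \<in> sets M" "emeasure M B = of_nat N * ennreal p"
    and pack: "packable M B p r" "0 < r" "r \<le> p" and \<Q>: "equal_packing M p B \<Q>"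
  shows "\<exists>\<P>. \<Q> \<subseteq> \<P> \<and> equal_packing M p B \<P> \<and> emeasure M (B - \<Union>\<P>) = 0"
proof -
  define D where "D = B - \<Union>\<Q>"
  have "D \<in> sets M"
    using B(1) \<Q> unfolding D_def equal_packing_def by (intro sets.Diff sets.finite_Union) auto
  then obtain \<P>\<^sub>D where \<P>\<^sub>D: "equal_packing M p D \<P>\<^sub>D" "emeasure M (D - \<Union>\<P>\<^sub>D) < ennreal r"
    using pack(1)[unfolded packable_def, rule_format, of D] unfolding D_def by blast
  have "\<Union>\<Q> \<inter> \<Union>\<P>\<^sub>D = {}"
    using \<P>\<^sub>D(1) unfolding equal_packing_def D_def by blast
  then have "disjoint (\<Q> \<union> \<P>\<^sub>D)"
    using \<Q> \<P>\<^sub>D(1) unfolding equal_packing_def by (intro disjoint_union) auto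
  then have packing: "equal_packing M p B (\<Q> \<union> \<P>\<^sub>D)"
    using \<Q> \<P>\<^sub>D(1) unfolding equal_packing_def D_def by blast
  have "B - \<Union>(\<Q> \<union> \<P>\<^sub>D) = D - \<Union>\<P>\<^sub>D"
    unfolding D_def by blast
  then have "emeasure M (B - \<Union>(\<Q> \<union> \<P>\<^sub>D)) = 0"
    using equal_packing_remainder_null[OF packing B] \<P>\<^sub>D(2) pack(2,3)
    by (metis ennreal_leI order_less_le_trans)
  then show ?thesis
    using packing by blast
qed

section \<open>Leveling step functions\<close>

lemma bij_betw_add_mod: "bij_betw (\<lambda>j. (j + r) mod k) {..<k} {..<k::nat}"
proof (cases "k = 0")
  case False
  have "inj_on (\<lambda>j. (j + r) mod k) {..<k}"
  proof (rule linorder_inj_onI)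
    fix i j assume "i < j" "i \<in> {..<k}" "j \<in> {..<k}"
    show "(i + r) mod k \<noteq> (j + r) mod k"
    proof
      assume "(i + r) mod k = (j + r) mod k"
      then have "k dvd j - i"
        using mod_eq_dvd_iff_nat[of "i + r" "j + r" k] \<open>i < j\<close> by simp
      then show False
        using \<open>i < j\<close> \<open>j \<in> {..<k}\<close> by (auto dest: dvd_imp_le)
    qed
  qed auto
  moreover have "(\<lambda>j. (j + r) mod k) ` {..<k} \<subseteq> {..<k}"
    using False by auto
  ultimately show ?thesis
    by (simp add: bij_betw_def endo_inj_surj)
qed (simp add: bij_betw_def)

lemma exists_cyclic_shifts:
  assumes "finite \<P>"
  obtains \<sigma> where "\<And>r. bij_betw (\<sigma> r) \<P> \<P>"
    and "\<And>P a. P \<in> \<P> \<Longrightarrow> (\<Sum>r<card \<P>. a (\<sigma> r P)) = (\<Sum>Q\<in>\<P>. a Q)"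
proof -
  define k where "k = card \<P>"
  obtain e where e: "bij_betw e {..<k} \<P>"
    using ex_bij_betw_nat_finite[OF assms] unfolding k_def lessThan_atLeast0 by blast
  define \<sigma> where "\<sigma> r = e \<circ> (\<lambda>j. (j + r) mod k) \<circ> inv_into {..<k} e" for r
  have "bij_betw (\<sigma> r) \<P> \<P>" for r
    unfolding \<sigma>_def using e bij_betw_add_mod bij_betw_inv_into by (blast intro: bij_betw_trans)
  moreover have "(\<Sum>r<k. a (\<sigma> r P)) = (\<Sum>Q\<in>\<P>. a Q)" if "P \<in> \<P>" for P a
  proof -
    define i where "i = inv_into {..<k} e P"
    have "(\<Sum>r<k. a (\<sigma> r P)) = (\<Sum>r<k. a (e ((r + i) mod k)))"
      unfolding \<sigma>_def i_def by (simp add: add.commute)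
    also have "\<dots> = (\<Sum>j<k. a (e j))"
      using sum.reindex_bij_betw[OF bij_betw_add_mod, of "\<lambda>j. a (e j)" i k] .
    also have "\<dots> = (\<Sum>Q\<in>\<P>. a Q)"
      using sum.reindex_bij_betw[OF e] .
    finally show ?thesis .
  qed
  ultimately show ?thesis
    using that unfolding k_def by blast
qed

definition blockwise :: "'a measure \<Rightarrow> 'a set set \<Rightarrow> ('a set \<Rightarrow> ennreal) \<Rightarrow> ('a \<Rightarrow> ennreal) \<Rightarrow> 'a \<Rightarrow> ennreal" where
  "blockwise M \<P> a u x = u x * indicator (space M - \<Union>\<P>) x + (\<Sum>P\<in>\<P>. a P * indicator P x)"

lemma blockwise_in_block:
  assumes "finite \<P>" "disjoint \<P>" "P \<in> \<P>" "x \<in> P"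
  shows "blockwise M \<P> a u x = a P"
proof -
  have "x \<notin> Q" if "Q \<in> \<P>" "Q \<noteq> P" for Q
    using assms(2-4) that unfolding disjoint_def by blast
  then have "(\<Sum>Q\<in>\<P>. a Q * indicator Q x) = (\<Sum>Q\<in>\<P>. if Q = P then a P else 0)"
    using assms(4) by (intro sum.cong refl) (simp add: indicator_def)
  moreover have "indicator (space M - \<Union>\<P>) x = (0::ennreal)"
    using assms(3,4) by (auto simp: indicator_def)
  ultimately show ?thesis
    using assms(1,3) unfolding blockwise_def by simp
qed

lemma blockwise_outside: "x \<notin> \<Union>\<P> \<Longrightarrow> x \<in> space M \<Longrightarrow> blockwise M \<P> a u x = u x"
  unfolding blockwise_def by (auto intro: sum.neutral)

lemma borel_measurable_blockwise:
  assumes "finite \<P>" "\<P> \<subseteq> sets M" "u \<in> borel_measurable M"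
  shows "blockwise M \<P> a u \<in> borel_measurable M"
proof -
  have "space M - \<Union>\<P> \<in> sets M"
    using assms(1,2) by (intro sets.compl_sets sets.finite_Union) auto
  then show ?thesis
    using assms unfolding blockwise_def by (intro borel_measurable_add borel_measurable_sum) auto
qed

lemma superlevel_set_blockwise:
  assumes fin: "finite \<P>" "disjoint \<P>" "\<P> \<subseteq> sets M"
  shows "{x \<in> space M. c < blockwise M \<P> a u x} =
    ({x \<in> space M. c < u x} - \<Union>\<P>) \<union> \<Union>{P \<in> \<P>. c < a P}"
proof (intro set_eqI iffI)
  fix x assume x: "x \<in> {x \<in> space M. c < blockwise M \<P> a u x}"
  show "x \<in> ({x \<in> space M. c < u x} - \<Union>\<P>) \<union> \<Union>{P \<in> \<P>. c < a P}"
  proof (cases "x \<in> \<Union>\<P>")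
    case True
    then obtain P where "P \<in> \<P>" "x \<in> P"
      by blast
    then show ?thesis
      using x blockwise_in_block[OF fin(1,2) \<open>P \<in> \<P>\<close> \<open>x \<in> P\<close>] by auto
  next
    case False
    then show ?thesis
      using x blockwise_outside[OF False] by auto
  qed
next
  fix x assume x: "x \<in> ({x \<in> space M. c < u x} - \<Union>\<P>) \<union> \<Union>{P \<in> \<P>. c < a P}"
  show "x \<in> {x \<in> space M. c < blockwise M \<P> a u x}"
  proof (cases "x \<in> \<Union>{P \<in> \<P>. c < a P}")
    case True
    then obtain P where P: "P \<in> \<P>" "c < a P" "x \<in> P"
      by blast
    moreover have "x \<in> space M"
      using fin(3) P(1,3) sets.sets_into_space by blast
    ultimately show ?thesis
      using blockwise_in_block[OF fin(1,2) P(1,3)] by simp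
  next
    case False
    then have "x \<notin> \<Union>\<P>" "x \<in> space M" "c < u x"
      using x by auto
    then show ?thesis
      using blockwise_outside[of x \<P> M a u] by simp
  qed
qed

lemma distrib_fun_blockwise:
  assumes \<P>: "equal_packing M p X \<P>" "0 \<le> p" and u: "u \<in> borel_measurable M"
  shows "distrib_fun M (blockwise M \<P> a u) s =
    emeasure M ({x \<in> space M. ennreal s < u x} - \<Union>\<P>) + of_nat (card {P \<in> \<P>. ennreal s < a P}) * ennreal p"
proof -
  define \<Q> where "\<Q> = {P \<in> \<P>. ennreal s < a P}"
  have fin: "finite \<P>" "disjoint \<P>" "\<P> \<subseteq> sets M"
    using \<P>(1) unfolding equal_packing_def by auto
  have "emeasure M (({x \<in> space M. ennreal s < u x} - \<Union>\<P>) \<union> \<Union>\<Q>) =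
      emeasure M ({x \<in> space M. ennreal s < u x} - \<Union>\<P>) + emeasure M (\<Union>\<Q>)"
  proof (rule plus_emeasure[symmetric])
    have "{x \<in> space M. ennreal s < u x} \<in> sets M"
      using u by measurable
    then show "{x \<in> space M. ennreal s < u x} - \<Union>\<P> \<in> sets M"
      using fin by (intro sets.Diff sets.finite_Union) auto
    show "\<Union>\<Q> \<in> sets M"
      using fin unfolding \<Q>_def by (intro sets.finite_Union) auto
  qed (auto simp: \<Q>_def)
  moreover have "emeasure M (\<Union>\<Q>) = of_nat (card \<Q>) * ennreal p"
    unfolding \<Q>_def by (intro equal_packing_emeasure_Union[OF equal_packing_subset[OF \<P>(1)] \<P>(2)]) auto
  ultimately show ?thesis
    unfolding distrib_fun_def superlevel_set_blockwise[OF fin] \<Q>_def by simp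
qed

lemma (in ri_function_norm) rho_blockwise_bij:
  assumes \<P>: "equal_packing M p X \<P>" "0 \<le> p" and u: "u \<in> borel_measurable M"
    and \<sigma>: "bij_betw \<sigma> \<P> \<P>"
  shows "\<rho> (blockwise M \<P> (\<lambda>P. a (\<sigma> P)) u) = \<rho> (blockwise M \<P> a u)"
proof (rule rho_distrib_fun_cong)
  show "blockwise M \<P> (\<lambda>P. a (\<sigma> P)) u \<in> borel_measurable M" "blockwise M \<P> a u \<in> borel_measurable M"
    using \<P>(1) u unfolding equal_packing_def by (auto intro!: borel_measurable_blockwise)
  fix s :: real
  have "\<sigma> ` {P \<in> \<P>. ennreal s < a (\<sigma> P)} = {P \<in> \<P>. ennreal s < a P}"
  proof
    show "\<sigma> ` {P \<in> \<P>. ennreal s < a (\<sigma> P)} \<subseteq> {P \<in> \<P>. ennreal s < a P}"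
      using bij_betw_apply[OF \<sigma>] by blast
    show "{P \<in> \<P>. ennreal s < a P} \<subseteq> \<sigma> ` {P \<in> \<P>. ennreal s < a (\<sigma> P)}"
    proof
      fix Q assume Q: "Q \<in> {P \<in> \<P>. ennreal s < a P}"
      then obtain P where "P \<in> \<P>" "Q = \<sigma> P"
        using bij_betw_imp_surj_on[OF \<sigma>] by blast
      then show "Q \<in> \<sigma> ` {P \<in> \<P>. ennreal s < a (\<sigma> P)}"
        using Q by blast
    qed
  qed
  moreover have "inj_on \<sigma> {P \<in> \<P>. ennreal s < a (\<sigma> P)}"
    using bij_betw_imp_inj_on[OF \<sigma>] by (rule inj_on_subset) blast
  ultimately have "card {P \<in> \<P>. ennreal s < a (\<sigma> P)} = card {P \<in> \<P>. ennreal s < a P}"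
    by (metis card_image)
  then show "distrib_fun M (blockwise M \<P> (\<lambda>P. a (\<sigma> P)) u) s = distrib_fun M (blockwise M \<P> a u) s"
    using distrib_fun_blockwise[OF \<P> u] by simp
qed

definition block_average :: "'a measure \<Rightarrow> 'a set \<Rightarrow> ('a \<Rightarrow> ennreal) \<Rightarrow> ennreal" where
  "block_average M B f = (\<integral>\<^sup>+x. f x * indicator B x \<partial>M) / emeasure M B"

definition level_on :: "'a measure \<Rightarrow> 'a set \<Rightarrow> ('a \<Rightarrow> ennreal) \<Rightarrow> 'a \<Rightarrow> ennreal" where
  "level_on M B f x = (if x \<in> B then block_average M B f else f x)"

lemma borel_measurable_level_on:
  "B \<in> sets M \<Longrightarrow> f \<in> borel_measurable M \<Longrightarrow> level_on M B f \<in> borel_measurable M"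
  unfolding level_on_def by (intro measurable_If_set) auto

lemma ennreal_divide_of_nat_mult:
  assumes "0 < k" "0 < p"
  shows "(a * ennreal p) / (of_nat k * ennreal p) = ennreal (1 / real k) * a"
proof -
  have "of_nat k * ennreal p = ennreal (real k * p)"
    using assms by (simp add: ennreal_of_nat_eq_real_of_nat ennreal_mult)
  then have "(a * ennreal p) / (of_nat k * ennreal p) = a * (ennreal p * ennreal (1 / (real k * p)))"
    using assms by (simp add: divide_ennreal_def inverse_ennreal inverse_eq_divide mult.assoc)
  also have "ennreal p * ennreal (1 / (real k * p)) = ennreal (1 / real k)"
    using assms by (simp flip: ennreal_mult)
  finally show ?thesis
    by (simp add: mult.commute)
qed

lemma block_average_step_function:
  assumes \<P>: "equal_packing M p B \<P>" "0 < p" "\<P> \<noteq> {}"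
    and B: "B \<in> sets M" "emeasure M (B - \<Union>\<P>) = 0"
    and uv: "\<And>P x. P \<in> \<P> \<Longrightarrow> x \<in> P \<Longrightarrow> u x = v P"
  shows "block_average M B u = ennreal (1 / real (card \<P>)) * (\<Sum>P\<in>\<P>. v P)"
proof -
  have fin: "finite \<P>" "disjoint \<P>" "\<P> \<subseteq> sets M" "\<And>P. P \<in> \<P> \<Longrightarrow> P \<subseteq> B"
    "\<And>P. P \<in> \<P> \<Longrightarrow> emeasure M P = ennreal p"
    using \<P>(1) unfolding equal_packing_def by auto
  have "B - \<Union>\<P> \<in> null_sets M"
    using B fin(1,3) by (auto intro!: sets.Diff sets.finite_Union)
  have "AE x in M. u x * indicator B x = blockwise M \<P> v (\<lambda>_. 0) x"
    using AE_not_in[OF \<open>B - \<Union>\<P> \<in> null_sets M\<close>] AE_space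
  proof eventually_elim
    case (elim x)
    show ?case
    proof (cases "x \<in> \<Union>\<P>")
      case True
      then obtain P where "P \<in> \<P>" "x \<in> P"
        by blast
      moreover have "x \<in> B"
        using fin(4) \<open>P \<in> \<P>\<close> \<open>x \<in> P\<close> by blast
      ultimately show ?thesis
        using uv blockwise_in_block[OF fin(1,2) \<open>P \<in> \<P>\<close> \<open>x \<in> P\<close>] by simp
    next
      case False
      then show ?thesis
        using elim blockwise_outside[OF False] by simp
    qed
  qed
  then have "(\<integral>\<^sup>+x. u x * indicator B x \<partial>M) = (\<integral>\<^sup>+x. (\<Sum>P\<in>\<P>. v P * indicator P x) \<partial>M)"
    by (simp add: nn_integral_cong_AE blockwise_def)
  also have "\<dots> = (\<Sum>P\<in>\<P>. \<integral>\<^sup>+x. v P * indicator P x \<partial>M)"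
    using fin(3) by (intro nn_integral_sum) auto
  also have "\<dots> = (\<Sum>P\<in>\<P>. v P * emeasure M P)"
    using fin(3) by (intro sum.cong refl nn_integral_cmult_indicator) auto
  also have "\<dots> = (\<Sum>P\<in>\<P>. v P) * ennreal p"
    using fin(5) by (simp add: sum_distrib_right)
  moreover have "emeasure M B = of_nat (card \<P>) * ennreal p"
    using equal_packing_emeasure_eq[OF \<P>(1) _ B] \<P>(2) by simp
  moreover have "0 < card \<P>"
    using fin(1) \<P>(3) by (simp add: card_gt_0_iff)
  ultimately show ?thesis
    unfolding block_average_def using ennreal_divide_of_nat_mult[OF _ \<P>(2)] by simp
qed

lemma level_on_eq_mean_of_shifts:
  assumes \<P>: "equal_packing M p B \<P>" "0 < p" "\<P> \<noteq> {}"
    and B: "B \<in> sets M" "emeasure M (B - \<Union>\<P>) = 0"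
    and uv: "\<And>P x. P \<in> \<P> \<Longrightarrow> x \<in> P \<Longrightarrow> u x = v P"
    and shifts: "\<And>P. P \<in> \<P> \<Longrightarrow> (\<Sum>r<card \<P>. v (\<sigma> r P)) = (\<Sum>Q\<in>\<P>. v Q)"
  shows "AE x in M. level_on M B u x =
    ennreal (1 / real (card \<P>)) * (\<Sum>r<card \<P>. blockwise M \<P> (\<lambda>P. v (\<sigma> r P)) u x)"
proof -
  have fin: "finite \<P>" "disjoint \<P>" "\<P> \<subseteq> sets M" "\<And>P. P \<in> \<P> \<Longrightarrow> P \<subseteq> B"
    using \<P>(1) unfolding equal_packing_def by auto
  have "0 < card \<P>"
    using fin(1) \<P>(3) by (simp add: card_gt_0_iff)
  have "B - \<Union>\<P> \<in> null_sets M"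
    using B fin(1,3) by (auto intro!: sets.Diff sets.finite_Union)
  show ?thesis
    using AE_not_in[OF \<open>B - \<Union>\<P> \<in> null_sets M\<close>] AE_space
  proof eventually_elim
    case (elim x)
    show ?case
    proof (cases "x \<in> \<Union>\<P>")
      case True
      then obtain P where P: "P \<in> \<P>" "x \<in> P"
        by blast
      have "(\<Sum>r<card \<P>. blockwise M \<P> (\<lambda>P. v (\<sigma> r P)) u x) = (\<Sum>Q\<in>\<P>. v Q)"
        unfolding blockwise_in_block[OF fin(1,2) P] by (rule shifts[OF P(1)])
      moreover have "x \<in> B"
        using fin(4) P by blast
      ultimately show ?thesis
        unfolding level_on_def using block_average_step_function[OF \<P> B uv] by simp
    next
      case False
      then have "blockwise M \<P> (\<lambda>P. v (\<sigma> r P)) u x = u x" for r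
        using elim blockwise_outside[OF False] by simp
      moreover have "x \<notin> B"
        using elim False by blast
      ultimately show ?thesis
        unfolding level_on_def using \<open>0 < card \<P>\<close>
        by (simp add: ennreal_of_nat_eq_real_of_nat mult.assoc[symmetric] flip: ennreal_mult)
    qed
  qed
qed

lemma (in ri_function_norm) rho_level_on_step_function:
  assumes \<P>: "equal_packing M p B \<P>" "0 < p"
    and B: "B \<in> sets M" "0 < emeasure M B" "emeasure M (B - \<Union>\<P>) = 0"
    and u: "u \<in> borel_measurable M" and uv: "\<And>P x. P \<in> \<P> \<Longrightarrow> x \<in> P \<Longrightarrow> u x = v P"
  shows "\<rho> (level_on M B u) \<le> \<rho> u"
proof -
  have fin: "finite \<P>" "\<P> \<subseteq> sets M"
    using \<P>(1) unfolding equal_packing_def by auto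
  have "\<P> \<noteq> {}"
    using B(2,3) by auto
  have k: "0 < card \<P>"
    using fin(1) \<open>\<P> \<noteq> {}\<close> by (simp add: card_gt_0_iff)
  obtain \<sigma> where \<sigma>: "\<And>r. bij_betw (\<sigma> r) \<P> \<P>"
    and shifts: "\<And>P (a :: 'a set \<Rightarrow> ennreal). P \<in> \<P> \<Longrightarrow> (\<Sum>r<card \<P>. a (\<sigma> r P)) = (\<Sum>Q\<in>\<P>. a Q)"
    using exists_cyclic_shifts[OF fin(1)] by metis
  \<comment> \<open>The cyclic rearrangements \<open>g r\<close> are equimeasurable with \<open>u\<close>; their mean is the leveled function.\<close>
  define g where "g r = blockwise M \<P> (\<lambda>P. v (\<sigma> r P)) u" for r
  have g_meas: "g r \<in> borel_measurable M" for r
    unfolding g_def using fin u by (intro borel_measurable_blockwise)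
  have "AE x in M. u x = blockwise M \<P> v u x"
  proof (rule AE_I2)
    fix x assume "x \<in> space M"
    then show "u x = blockwise M \<P> v u x"
      using uv blockwise_in_block[OF fin(1) _ ] \<P>(1) blockwise_outside[of x \<P> M v u]
      unfolding equal_packing_def by (cases "x \<in> \<Union>\<P>") auto
  qed
  then have "\<rho> (g r) = \<rho> u" for r
    unfolding g_def using rho_blockwise_bij[OF \<P>(1) _ u \<sigma>] \<P>(2) fin u
    by (simp add: rho_AE_cong[OF u borel_measurable_blockwise])
  have "AE x in M. level_on M B u x = ennreal (1 / real (card \<P>)) * (\<Sum>r<card \<P>. g r x)"
    unfolding g_def using level_on_eq_mean_of_shifts[OF \<P> \<open>\<P> \<noteq> {}\<close> B(1,3) uv shifts] .
  then have "\<rho> (level_on M B u) = \<rho> (\<lambda>x. ennreal (1 / real (card \<P>)) * (\<Sum>r<card \<P>. g r x))"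
    using g_meas by (intro rho_AE_cong borel_measurable_level_on B(1) u) measurable
  also have "\<dots> \<le> ennreal (1 / real (card \<P>)) * (\<Sum>r<card \<P>. \<rho> (g r))"
    using g_meas by (subst rho_cmult) (auto intro!: mult_left_mono rho_sum)
  also have "\<dots> = \<rho> u"
    using \<open>\<And>r. \<rho> (g r) = \<rho> u\<close> k by (simp add: ennreal_of_nat_eq_real_of_nat mult.assoc[symmetric] flip: ennreal_mult)
  finally show ?thesis .
qed

section \<open>Leveling on one block\<close>

lemma exists_simple_minorant:
  assumes f: "f \<in> borel_measurable M" and B: "B \<in> sets M"
    and fin: "(\<integral>\<^sup>+x. f x * indicator B x \<partial>M) < \<infinity>" and \<epsilon>: "0 < \<epsilon>"
  shows "\<exists>s W. simple_function M s \<and> (\<forall>x. s x \<le> f x) \<and> 0 \<le> W \<and> (\<forall>x\<in>space M. s x \<le> ennreal W) \<and>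
    (\<integral>\<^sup>+x. f x * indicator B x \<partial>M) \<le> (\<integral>\<^sup>+x. s x * indicator B x \<partial>M) + ennreal \<epsilon>"
proof -
  obtain F where F: "\<And>i. simple_function M (F i)" "incseq F" "\<And>i x. F i x < top" "\<And>x. (SUP i. F i x) = f x"
    using borel_measurable_implies_simple_function_sequence'[OF f] by blast
  have "(\<integral>\<^sup>+x. f x * indicator B x \<partial>M) = (SUP i. \<integral>\<^sup>+x. F i x * indicator B x \<partial>M)"
  proof -
    have "incseq (\<lambda>i x. F i x * indicator B x)"
      using F(2) by (auto simp: incseq_def le_fun_def intro!: mult_right_mono)
    moreover have "(\<lambda>x. F i x * indicator B x) \<in> borel_measurable M" for i
      using borel_measurable_simple_function[OF F(1)] B by simp
    ultimately have "(\<integral>\<^sup>+x. (SUP i. F i x * indicator B x) \<partial>M) = (SUP i. \<integral>\<^sup>+x. F i x * indicator B x \<partial>M)"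
      by (rule nn_integral_monotone_convergence_SUP)
    moreover have "(SUP i. F i x * indicator B x) = f x * indicator B x" for x
      using F(4)[of x] by (cases "x \<in> B") auto
    ultimately show ?thesis
      by simp
  qed
  then obtain i where i: "(\<integral>\<^sup>+x. f x * indicator B x \<partial>M) < (\<integral>\<^sup>+x. F i x * indicator B x \<partial>M) + ennreal \<epsilon>"
    using SUP_approx_ennreal[OF \<epsilon>, of UNIV] fin by fastforce
  define W where "W = (\<Sum>y\<in>F i ` space M. enn2real y)"
  have "F i x \<le> ennreal W" if "x \<in> space M" for x
  proof -
    have "enn2real (F i x) \<le> W"
      unfolding W_def using simple_functionD(1)[OF F(1)] that
      by (intro member_le_sum) auto
    then show ?thesis
      using F(3)[of i x] by (metis ennreal_enn2real ennreal_leI less_top)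
  qed
  moreover have "F i x \<le> f x" for x
    using F(4)[of x] by (metis SUP_upper UNIV_I)
  moreover have "0 \<le> W"
    unfolding W_def by (intro sum_nonneg) auto
  ultimately show ?thesis
    using F(1) i by (intro exI[of _ "F i"] exI[of _ W]) auto
qed

lemma (in ri_function_norm) exists_step_minorant:
  assumes B: "B \<in> sets M" "0 < emeasure M B" "emeasure M B = of_nat N * ennreal p"
    and pack: "packable M B p r" "0 < r" "r \<le> p"
    and f: "f \<in> borel_measurable M"
    and s: "simple_function M s" "\<And>x. s x \<le> f x" "\<And>x. x \<in> space M \<Longrightarrow> s x \<le> W"
  shows "\<exists>u\<in>borel_measurable M. (\<forall>x\<in>space M - B. u x = f x) \<and> (\<forall>x. u x \<le> f x) \<and>
    \<rho> (level_on M B u) \<le> \<rho> u \<and>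
    (\<integral>\<^sup>+x. s x * indicator B x \<partial>M) \<le> (\<integral>\<^sup>+x. u x * indicator B x \<partial>M) + W * of_nat (card (s ` space M)) * ennreal r"
proof -
  obtain \<Q> where \<Q>: "equal_packing M p B \<Q>" and \<Q>_constant: "\<forall>Q\<in>\<Q>. \<exists>w. \<forall>x\<in>Q. s x = w"
    and small: "emeasure M (B - \<Union>\<Q>) \<le> of_nat (card (s ` space M)) * ennreal r"
    using packable_level_sets[OF B(1) pack(1) s(1)] by blast
  obtain w where w: "\<forall>Q\<in>\<Q>. \<forall>x\<in>Q. s x = w Q"
    using bchoice[OF \<Q>_constant] by blast
  obtain \<P> where \<P>: "\<Q> \<subseteq> \<P>" "equal_packing M p B \<P>" "emeasure M (B - \<Union>\<P>) = 0"
    using packable_complete[OF B(1,3) pack \<Q>] by blast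
  have fin: "finite \<P>" "disjoint \<P>" "\<And>P. P \<in> \<P> \<Longrightarrow> P \<subseteq> B"
    using \<P>(2) unfolding equal_packing_def by auto
  define u where "u x = (if x \<in> B then (if x \<in> \<Union>\<Q> then s x else 0) else f x)" for x
  define v where "v P = (if P \<in> \<Q> then w P else 0)" for P
  have "\<Union>\<Q> \<in> sets M"
    using \<Q> unfolding equal_packing_def by (intro sets.finite_Union) auto
  then have u_meas: "u \<in> borel_measurable M"
    unfolding u_def using B(1) f borel_measurable_simple_function[OF s(1)]
    by (intro measurable_If_set) auto
  have uv: "u x = v P" if P: "P \<in> \<P>" "x \<in> P" for P x
  proof (cases "P \<in> \<Q>")
    case True
    then have "x \<in> B" "x \<in> \<Union>\<Q>"
      using P fin(3) by auto
    then show ?thesis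
      using w True P(2) unfolding u_def v_def by simp
  next
    case False
    then have "x \<in> B" "x \<notin> \<Union>\<Q>"
      using P fin(3) disjointD[OF fin(2) P(1)] \<P>(1) by blast+
    then show ?thesis
      using False unfolding u_def v_def by simp
  qed
  have "\<rho> (level_on M B u) \<le> \<rho> u"
    using rho_level_on_step_function[OF \<P>(2) _ B(1,2) \<P>(3) u_meas uv] pack(2,3) by simp
  moreover have "(\<integral>\<^sup>+x. s x * indicator B x \<partial>M) \<le>
      (\<integral>\<^sup>+x. u x * indicator B x \<partial>M) + W * of_nat (card (s ` space M)) * ennreal r"
  proof -
    have "(\<integral>\<^sup>+x. s x * indicator B x \<partial>M) \<le> (\<integral>\<^sup>+x. u x * indicator B x + W * indicator (B - \<Union>\<Q>) x \<partial>M)"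
      using s(3) unfolding u_def by (intro nn_integral_mono) (auto simp: indicator_def)
    also have "\<dots> = (\<integral>\<^sup>+x. u x * indicator B x \<partial>M) + W * emeasure M (B - \<Union>\<Q>)"
      using u_meas B(1) \<open>\<Union>\<Q> \<in> sets M\<close> by (subst nn_integral_add) (auto simp: nn_integral_cmult_indicator)
    also have "W * emeasure M (B - \<Union>\<Q>) \<le> W * of_nat (card (s ` space M)) * ennreal r"
      using small by (simp add: mult.assoc mult_left_mono)
    finally show ?thesis
      by (simp add: add_left_mono)
  qed
  moreover have "\<forall>x. u x \<le> f x" "\<forall>x\<in>space M - B. u x = f x"
    using s(2) unfolding u_def by simp_all
  ultimately show ?thesis
    using u_meas by blast
qed

lemma (in ri_function_norm) exists_leveled_minorant:
  assumes B: "B \<in> sets M" "0 < emeasure M B"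
    and fine: "finely_packable M B"
    and f: "f \<in> borel_measurable M" "(\<integral>\<^sup>+x. f x * indicator B x \<partial>M) < \<infinity>" and \<eta>: "0 < \<eta>"
  shows "\<exists>u\<in>borel_measurable M. (\<forall>x\<in>space M - B. u x = f x) \<and> (\<forall>x. u x \<le> f x) \<and>
    \<rho> (level_on M B u) \<le> \<rho> u \<and>
    (\<integral>\<^sup>+x. f x * indicator B x \<partial>M) \<le> (\<integral>\<^sup>+x. u x * indicator B x \<partial>M) + ennreal \<eta>"
proof -
  obtain s W where s: "simple_function M s" "\<forall>x. s x \<le> f x" "0 \<le> W" "\<forall>x\<in>space M. s x \<le> ennreal W"
    and s_close: "(\<integral>\<^sup>+x. f x * indicator B x \<partial>M) \<le> (\<integral>\<^sup>+x. s x * indicator B x \<partial>M) + ennreal (\<eta> / 2)"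
    using exists_simple_minorant[OF f(1) B(1) f(2), of "\<eta> / 2"] \<eta> by auto
  define c where "c = real (card (s ` space M))"
  define \<delta> where "\<delta> = (\<eta> / 2) / (W * c + 1)"
  have "0 \<le> W * c"
    using s(3) unfolding c_def by simp
  then have "0 < \<delta>"
    unfolding \<delta>_def using \<eta> by simp
  then obtain p r N where pack: "0 < r" "r \<le> p" "r \<le> \<delta>" "emeasure M B = of_nat N * ennreal p" "packable M B p r"
    using fine unfolding finely_packable_def by blast
  obtain u where u: "u \<in> borel_measurable M" "\<forall>x\<in>space M - B. u x = f x" "\<forall>x. u x \<le> f x"
    "\<rho> (level_on M B u) \<le> \<rho> u"
    and u_close: "(\<integral>\<^sup>+x. s x * indicator B x \<partial>M) \<le>
      (\<integral>\<^sup>+x. u x * indicator B x \<partial>M) + ennreal W * of_nat (card (s ` space M)) * ennreal r"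
    using exists_step_minorant[OF B pack(4,5,1,2) f(1) s(1)] s(2,4) by blast
  have "W * c * r \<le> W * c * \<delta>"
    using pack(3) \<open>0 \<le> W * c\<close> by (intro mult_left_mono)
  also have "\<dots> \<le> \<eta> / 2"
    unfolding \<delta>_def using \<open>0 \<le> W * c\<close> \<eta> by (simp add: field_simps)
  finally have "ennreal W * of_nat (card (s ` space M)) * ennreal r \<le> ennreal (\<eta> / 2)"
    using s(3) pack(1) unfolding c_def
    by (simp add: ennreal_of_nat_eq_real_of_nat ennreal_leI flip: ennreal_mult)
  then have "(\<integral>\<^sup>+x. f x * indicator B x \<partial>M) \<le> (\<integral>\<^sup>+x. u x * indicator B x \<partial>M) + ennreal (\<eta> / 2) + ennreal (\<eta> / 2)"
    using s_close u_close by (meson add_left_mono add_right_mono order_trans)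
  also have "\<dots> = (\<integral>\<^sup>+x. u x * indicator B x \<partial>M) + ennreal \<eta>"
    using \<eta> by (simp add: add.assoc flip: ennreal_plus)
  finally show ?thesis
    using u by blast
qed

lemma (in ri_function_norm) rho_level_on_le:
  assumes B: "B \<in> sets M" "0 < emeasure M B" "emeasure M B < \<infinity>"
    and fine: "finely_packable M B"
    and f: "f \<in> borel_measurable M" "(\<integral>\<^sup>+x. f x * indicator B x \<partial>M) < \<infinity>"
  shows "\<rho> (level_on M B f) \<le> \<rho> f"
proof (rule ennreal_le_epsilon)
  fix e :: real assume "0 < e"
  define m where "m = measure M B"
  have m: "emeasure M B = ennreal m" "0 < m"
    using B unfolding m_def by (auto simp: emeasure_eq_ennreal_measure less_top)
  obtain K where K: "\<rho> (indicator B) = ennreal K" "0 \<le> K"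
    using rho_indicator_finite[OF B(1,3)] by (cases "\<rho> (indicator B)") auto
  define c where "c = e / (K + 1)"
  have c: "0 < c" "c * K \<le> e"
    unfolding c_def using \<open>0 < e\<close> K(2) by (auto simp: field_simps)
  obtain u where u: "u \<in> borel_measurable M" "\<forall>x\<in>space M - B. u x = f x" "\<forall>x. u x \<le> f x"
    "\<rho> (level_on M B u) \<le> \<rho> u"
    and u_close: "(\<integral>\<^sup>+x. f x * indicator B x \<partial>M) \<le> (\<integral>\<^sup>+x. u x * indicator B x \<partial>M) + ennreal (c * m)"
    using exists_leveled_minorant[OF B(1,2) fine f mult_pos_pos[OF c(1) m(2)]] by blast
  have "block_average M B f \<le> ((\<integral>\<^sup>+x. u x * indicator B x \<partial>M) + ennreal (c * m)) / ennreal m"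
    unfolding block_average_def m(1) using u_close by (rule divide_right_mono_ennreal)
  also have "\<dots> = block_average M B u + ennreal c"
    unfolding block_average_def m(1) add_divide_distrib_ennreal using m(2) c(1) by (simp add: divide_ennreal)
  finally have "AE x in M. level_on M B f x \<le> level_on M B u x + ennreal c * indicator B x"
    using u(2) unfolding level_on_def by (intro AE_I2) auto
  moreover have "(\<lambda>x. ennreal c * indicator B x) \<in> borel_measurable M"
    using B(1) by simp
  ultimately have "\<rho> (level_on M B f) \<le> \<rho> (\<lambda>x. level_on M B u x + ennreal c * indicator B x)"
    using borel_measurable_level_on[OF B(1)] f(1) u(1) by (intro rho_mono_AE borel_measurable_add) auto
  also have "\<dots> \<le> \<rho> (level_on M B u) + \<rho> (\<lambda>x. ennreal c * indicator B x)"
    using B(1) u(1) by (intro rho_add borel_measurable_level_on) auto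
  also have "\<rho> (\<lambda>x. ennreal c * indicator B x) = ennreal (c * K)"
    using B(1) c(1) K by (simp add: rho_cmult ennreal_mult)
  also have "\<rho> (level_on M B u) + ennreal (c * K) \<le> \<rho> f + ennreal e"
    using u(4) rho_mono_AE[OF u(1) f(1)] u(3) c(2) by (intro add_mono ennreal_leI) auto
  finally show "\<rho> (level_on M B f) \<le> \<rho> f + ennreal e" .
qed

lemma (in ri_function_norm) rho_level_on_le_resonant:
  assumes "sigma_finite_measure M" "resonant M"
    and B: "B \<in> sets M" "0 < emeasure M B" "emeasure M B < \<infinity>"
    and dominated: "\<exists>C. \<forall>f\<in>borel_measurable M. (\<integral>\<^sup>+x. f x * indicator B x \<partial>M) \<le> ennreal C * \<rho> f"
    and g: "g \<in> borel_measurable M"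
  shows "\<rho> (level_on M B g) \<le> \<rho> g"
proof (cases "\<rho> g = \<infinity>")
  case False
  obtain C where "(\<integral>\<^sup>+x. g x * indicator B x \<partial>M) \<le> ennreal C * \<rho> g"
    using dominated g by blast
  then have "(\<integral>\<^sup>+x. g x * indicator B x \<partial>M) < \<infinity>"
    using False by (simp add: ennreal_mult_less_top less_top le_less_trans)
  then show ?thesis
    using rho_level_on_le[OF B resonant_finely_packable[OF assms(1,2) B] g] by blast
qed simp

section \<open>Conditional expectations\<close>

lemma blockwise_insert_eq_level_on:
  assumes \<B>: "finite \<B>" "B \<notin> \<B>" "disjoint (insert B \<B>)" and B: "B \<in> sets M" and x: "x \<in> space M"
  shows "blockwise M (insert B \<B>) (\<lambda>C. block_average M C f) f x =
    level_on M B (blockwise M \<B> (\<lambda>C. block_average M C f) f) x"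
proof -
  define g where "g = blockwise M \<B> (\<lambda>C. block_average M C f) f"
  have B_disj: "B \<inter> \<Union>\<B> = {}"
    using \<B>(2,3) unfolding disjoint_def by auto
  have dj: "disjoint \<B>"
    using \<B>(3) by (auto simp: pairwise_insert)
  have "g y = f y" if "y \<in> B" for y
    unfolding g_def using that B_disj sets.sets_into_space[OF B] by (intro blockwise_outside) auto
  then have avg: "block_average M B g = block_average M B f"
    unfolding block_average_def by (metis indicator_simps(2) mult_zero_right)
  consider "x \<in> B" | C where "C \<in> \<B>" "x \<in> C" | "x \<notin> \<Union>(insert B \<B>)"
    by blast
  then show ?thesis
  proof cases
    case 1
    then show ?thesis
      using blockwise_in_block[OF finite.insertI[OF \<B>(1)] \<B>(3) insertI1 1] avg
      unfolding level_on_def g_def by simp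
  next
    case (2 C)
    then have "x \<notin> B"
      using B_disj by blast
    then show ?thesis
      unfolding level_on_def
      using blockwise_in_block[OF finite.insertI[OF \<B>(1)] \<B>(3) insertI2[OF 2(1)] 2(2)]
        blockwise_in_block[OF \<B>(1) dj 2] by simp
  next
    case 3
    then have "x \<notin> B" "x \<notin> \<Union>\<B>"
      by auto
    then show ?thesis
      unfolding level_on_def using blockwise_outside[OF 3 x] blockwise_outside[OF _ x] by simp
  qed
qed

lemma (in ri_function_norm) rho_blockwise_averages_le:
  assumes "finite \<B>" "\<B> \<subseteq> sets M" "disjoint \<B>"
    and level: "\<And>B g. B \<in> \<B> \<Longrightarrow> g \<in> borel_measurable M \<Longrightarrow> \<rho> (level_on M B g) \<le> \<rho> g"
    and f: "f \<in> borel_measurable M"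
  shows "\<rho> (blockwise M \<B> (\<lambda>B. block_average M B f) f) \<le> \<rho> f"
  using assms(1-4)
proof (induction \<B> rule: finite_induct)
  case empty
  have "AE x in M. blockwise M {} (\<lambda>B. block_average M B f) f x = f x"
    by (intro AE_I2) (simp add: blockwise_def)
  then show ?case
    using f by (simp add: rho_AE_cong[OF borel_measurable_blockwise])
next
  case (insert B \<B>)
  define g where "g = blockwise M \<B> (\<lambda>B. block_average M B f) f"
  have g_meas: "g \<in> borel_measurable M"
    unfolding g_def using insert f by (intro borel_measurable_blockwise) auto
  have "AE x in M. blockwise M (insert B \<B>) (\<lambda>B. block_average M B f) f x = level_on M B g x"
    unfolding g_def using insert by (intro AE_I2 blockwise_insert_eq_level_on) auto
  then have "\<rho> (blockwise M (insert B \<B>) (\<lambda>B. block_average M B f) f) = \<rho> (level_on M B g)"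
    using insert.prems(1) insert.hyps(1) f g_meas
    by (intro rho_AE_cong borel_measurable_blockwise borel_measurable_level_on) auto
  also have "\<dots> \<le> \<rho> g"
    using insert.prems(3) g_meas by simp
  also have "\<dots> \<le> \<rho> f"
    unfolding g_def using insert by (simp add: pairwise_insert)
  finally show ?case .
qed

lemma fin_atom_self: "x \<in> fin_atom \<Sigma> x"
  unfolding fin_atom_def by auto

lemma fin_atom_in:
  assumes "finite_sub_sigma M \<Sigma>" "x \<in> space M"
  shows "fin_atom \<Sigma> x \<in> \<Sigma>"
proof -
  interpret sigma_algebra "space M" \<Sigma>
    using assms(1) unfolding finite_sub_sigma_def by blast
  have "finite {A \<in> \<Sigma>. x \<in> A}" "{A \<in> \<Sigma>. x \<in> A} \<noteq> {}"
    using assms unfolding finite_sub_sigma_def by auto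
  then have "(\<Inter>A\<in>{A \<in> \<Sigma>. x \<in> A}. A) \<in> \<Sigma>"
    by (rule finite_INT) auto
  then show ?thesis
    unfolding fin_atom_def by simp
qed

lemma fin_atom_eq:
  assumes \<Sigma>: "finite_sub_sigma M \<Sigma>" and x: "x \<in> space M" and y: "y \<in> fin_atom \<Sigma> x"
  shows "fin_atom \<Sigma> y = fin_atom \<Sigma> x"
proof
  interpret sigma_algebra "space M" \<Sigma>
    using \<Sigma> unfolding finite_sub_sigma_def by blast
  show "fin_atom \<Sigma> y \<subseteq> fin_atom \<Sigma> x"
    using fin_atom_in[OF \<Sigma> x] y unfolding fin_atom_def by auto
  show "fin_atom \<Sigma> x \<subseteq> fin_atom \<Sigma> y"
    unfolding fin_atom_def[of \<Sigma> y]
  proof (rule Inter_greatest)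
    fix A assume A: "A \<in> {A \<in> \<Sigma>. y \<in> A}"
    show "fin_atom \<Sigma> x \<subseteq> A"
    proof (cases "x \<in> A")
      case True
      then show ?thesis
        using A unfolding fin_atom_def by auto
    next
      case False
      then have "fin_atom \<Sigma> x \<subseteq> space M - A"
        using A x compl_sets unfolding fin_atom_def by auto
      then show ?thesis
        using y A by auto
    qed
  qed
qed

lemma cond_exp_fin_eq_blockwise:
  assumes \<Sigma>: "finite_sub_sigma M \<Sigma>"
  defines "\<B> \<equiv> {A \<in> fin_atom \<Sigma> ` space M. 0 < emeasure M A \<and> emeasure M A < \<infinity>}"
  shows "finite \<B>" "\<B> \<subseteq> sets M" "disjoint \<B>"
    and "x \<in> space M \<Longrightarrow> cond_exp_fin M \<Sigma> f x = blockwise M \<B> (\<lambda>B. block_average M B f) (\<lambda>_. 0) x"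
proof -
  have "\<B> \<subseteq> \<Sigma>"
    unfolding \<B>_def using fin_atom_in[OF \<Sigma>] by blast
  then show "finite \<B>" "\<B> \<subseteq> sets M"
    using \<Sigma> unfolding finite_sub_sigma_def by (auto intro: finite_subset)
  have same_atom: "B = fin_atom \<Sigma> x" if "B \<in> \<B>" "x \<in> B" for B x
    using that fin_atom_eq[OF \<Sigma>] unfolding \<B>_def by auto
  show "disjoint \<B>"
    using same_atom by (auto simp: disjoint_def)
  assume x: "x \<in> space M"
  show "cond_exp_fin M \<Sigma> f x = blockwise M \<B> (\<lambda>B. block_average M B f) (\<lambda>_. 0) x"
  proof (cases "fin_atom \<Sigma> x \<in> \<B>")
    case True
    then show ?thesis
      using blockwise_in_block[OF \<open>finite \<B>\<close> \<open>disjoint \<B>\<close> True fin_atom_self]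
      unfolding cond_exp_fin_def block_average_def \<B>_def by (simp add: Let_def)
  next
    case False
    then have "x \<notin> \<Union>\<B>"
      using same_atom by blast
    then show ?thesis
      using False x blockwise_outside[of x \<B>] unfolding cond_exp_fin_def \<B>_def by (auto simp: Let_def)
  qed
qed

lemma (in ri_function_norm) rho_cond_exp_fin_le:
  assumes \<Sigma>: "finite_sub_sigma M \<Sigma>" and f: "f \<in> borel_measurable M"
    and level: "\<And>B g. B \<in> sets M \<Longrightarrow> 0 < emeasure M B \<Longrightarrow> emeasure M B < \<infinity> \<Longrightarrow>
      g \<in> borel_measurable M \<Longrightarrow> \<rho> (level_on M B g) \<le> \<rho> g"
  shows "\<rho> (cond_exp_fin M \<Sigma> f) \<le> \<rho> f"
proof -
  define \<B> where "\<B> = {A \<in> fin_atom \<Sigma> ` space M. 0 < emeasure M A \<and> emeasure M A < \<infinity>}"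
  note \<B> = cond_exp_fin_eq_blockwise[OF \<Sigma>, folded \<B>_def]
  have "cond_exp_fin M \<Sigma> f \<in> borel_measurable M"
    using \<B> by (subst measurable_cong[where g="blockwise M \<B> (\<lambda>B. block_average M B f) (\<lambda>_. 0)"])
      (auto intro: borel_measurable_blockwise)
  then have "\<rho> (cond_exp_fin M \<Sigma> f) \<le> \<rho> (blockwise M \<B> (\<lambda>B. block_average M B f) f)"
    using \<B> f by (intro rho_mono_AE AE_I2 borel_measurable_blockwise) (auto simp: blockwise_def)
  also have "\<dots> \<le> \<rho> f"
    using \<B>(1-3) f level unfolding \<B>_def by (intro rho_blockwise_averages_le) auto
  finally show ?thesis .
qed

theorem theorem3p47:
  fixes M :: "'a measure" and \<rho> :: "('a \<Rightarrow> ennreal) \<Rightarrow> ennreal"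
  assumes "sigma_finite_measure M"
    and "resonant M"
    and "function_norm M \<rho>"
    and "rearrangement_invariant M \<rho>"
    and "\<forall>E\<in>sets M. emeasure M E < \<infinity> \<longrightarrow>
           (\<exists>C::real. \<forall>f\<in>borel_measurable M.
              (\<integral>\<^sup>+ x. f x * indicator E x \<partial>M) \<le> ennreal C * \<rho> f)"
  shows "leveling M \<rho>"
proof -
  interpret ri_function_norm M \<rho>
    using assms(3,4) by unfold_locales
  have "\<rho> (cond_exp_fin M \<Sigma> f) \<le> \<rho> f"
    if "finite_sub_sigma M \<Sigma>" "f \<in> borel_measurable M" for \<Sigma> and f :: "'a \<Rightarrow> ennreal"
    using that assms(5) by (intro rho_cond_exp_fin_le rho_level_on_le_resonant[OF assms(1,2)]) auto
  then show ?thesis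
    unfolding leveling_def by (intro exI[of _ 1]) auto
qed

end
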